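(* Let $(U,\mathcal{I})$ be a laminar matroid, $f:2^U\to\mathbb{R}_{\ge0}$ non-negative, monotonically non-decreasing and submodular, $p\in(0,1)$, and let $M,N$ and $w$ be as produced by $\mathrm{SIMULATE}$ (see context). Then $$\mathbb{E}[f(M)]=\mathbb{E}[w(M)]=\frac{p}{1-p}\,\mathbb{E}[w(N)]\ge\frac p2\cdot\mathrm{OPT},$$ where $\mathrm{OPT}=\max_{T\in\mathcal{I}}f(T)$.
   Context: Laminar matroid: a laminar family $\mathcal{F}$ of subsets of $U$ (any two members disjoint or nested) with integer capacities $\mu(B)$, and $\mathcal{I}=\{T\subseteq U:|T\cap B|\le\mu(B)\ \forall B\in\mathcal{F}\}$. Write $f_T(e)=f(T\cup\{e\})-f(T)$. $\mathrm{SIMULATE}$: each element of $U$ is independently put into a set $H$ with probability $p$. Start with $M=N=\emptyset$. While there exists $e\in U\setminus(M\cup N)$ with $M\cup\{e\}\in\mathcal{I}$, take such an $e$ maximizing $f_M(e)$ (ties broken by a fixed rule); let $M_e$ denote the current $M$ at that moment; if $e\in H$ add $e$ to $M$, otherwise to $N$. Define $w(e)=f_{M_e}(e)$ for $e\in M\cup N$ and $w(e)=0$ for $e\notin M\cup N$, and $w(T)=\sum_{e\in T}w(e)$. *)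

theory Defs
  imports Complex_Main
begin

definition laminar :: "'a set \<Rightarrow> 'a set set \<Rightarrow> bool" where
  "laminar U F \<longleftrightarrow> (\<forall>B\<in>F. B \<subseteq> U) \<and>
     (\<forall>A\<in>F. \<forall>B\<in>F. A \<inter> B = {} \<or> A \<subseteq> B \<or> B \<subseteq> A)"

definition lam_indep :: "'a set \<Rightarrow> 'a set set \<Rightarrow> ('a set \<Rightarrow> nat) \<Rightarrow> 'a set \<Rightarrow> bool" where
  "lam_indep U F mu T \<longleftrightarrow> T \<subseteq> U \<and> (\<forall>B\<in>F. card (T \<inter> B) \<le> mu B)"

definition monotone_fun :: "'a set \<Rightarrow> ('a set \<Rightarrow> real) \<Rightarrow> bool" where
  "monotone_fun U f \<longleftrightarrow> (\<forall>A B. A \<subseteq> B \<and> B \<subseteq> U \<longrightarrow> f A \<le> f B)"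

definition submodular :: "'a set \<Rightarrow> ('a set \<Rightarrow> real) \<Rightarrow> bool" where
  "submodular U f \<longleftrightarrow> (\<forall>A B. A \<subseteq> U \<and> B \<subseteq> U \<longrightarrow> f (A \<union> B) + f (A \<inter> B) \<le> f A + f B)"

definition marg :: "('a set \<Rightarrow> real) \<Rightarrow> 'a set \<Rightarrow> 'a \<Rightarrow> real" where
  "marg f T e = f (insert e T) - f T"

definition avail :: "'a set \<Rightarrow> ('a set \<Rightarrow> bool) \<Rightarrow> 'a set \<Rightarrow> 'a set \<Rightarrow> 'a set" where
  "avail U I M N = {e \<in> U - (M \<union> N). I (insert e M)}"

definition best :: "'a set \<Rightarrow> ('a set \<Rightarrow> bool) \<Rightarrow> ('a set \<Rightarrow> real) \<Rightarrow> 'a set \<Rightarrow> 'a set \<Rightarrow> 'a set" where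
  "best U I f M N = {e \<in> avail U I M N. \<forall>e'\<in>avail U I M N. marg f M e' \<le> marg f M e}"

(* One iteration of the while loop;
   sel is the fixed tie-breaking rule: given the current M, N and the set of
   maximisers it picks one of them. H is the random coin set. *)
definition sim_step ::
  "'a set \<Rightarrow> ('a set \<Rightarrow> bool) \<Rightarrow> ('a set \<Rightarrow> real) \<Rightarrow> ('a set \<Rightarrow> 'a set \<Rightarrow> 'a set \<Rightarrow> 'a)
   \<Rightarrow> 'a set \<Rightarrow> 'a set \<times> 'a set \<times> ('a \<Rightarrow> real) \<Rightarrow> 'a set \<times> 'a set \<times> ('a \<Rightarrow> real)" where
  "sim_step U I f sel H st = (case st of (M, N, w) \<Rightarrow>
     (if avail U I M N = {} then (M, N, w)
      else (let e = sel M N (best U I f M N) in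
            if e \<in> H then (insert e M, N, w(e := marg f M e))
            else (M, insert e N, w(e := marg f M e)))))"

(* Outcome of SIMULATE for coin set H: each non-terminal iteration adds a new
   element of U to M \<union> N, so card U iterations run the loop to completion. *)
definition simulate ::
  "'a set \<Rightarrow> ('a set \<Rightarrow> bool) \<Rightarrow> ('a set \<Rightarrow> real) \<Rightarrow> ('a set \<Rightarrow> 'a set \<Rightarrow> 'a set \<Rightarrow> 'a)
   \<Rightarrow> 'a set \<Rightarrow> 'a set \<times> 'a set \<times> ('a \<Rightarrow> real)" where
  "simulate U I f sel H = (sim_step U I f sel H ^^ card U) ({}, {}, (\<lambda>_. 0))"

definition sim_M where "sim_M U I f sel H = fst (simulate U I f sel H)"
definition sim_N where "sim_N U I f sel H = fst (snd (simulate U I f sel H))"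
definition sim_w where "sim_w U I f sel H = snd (snd (simulate U I f sel H))"

(* Expectation over H, each element of U independently in H with probability p. *)
definition expect :: "'a set \<Rightarrow> real \<Rightarrow> ('a set \<Rightarrow> real) \<Rightarrow> real" where
  "expect U p g = (\<Sum>H\<in>Pow U. p ^ card H * (1 - p) ^ (card U - card H) * g H)"

end

theory Submission
  imports Defs
begin

text \<open>
  Since \<open>f\<close> telescopes along the accepted elements, \<open>f(M) = w(M)\<close> holds for every outcome.
  Coupling the coin sets \<open>H\<close> and \<open>H \<union> {e}\<close> for \<open>e \<notin> H\<close>, the two runs agree until \<open>e\<close> is picked,
  after which \<open>e\<close> lies in \<open>N\<close> in one run and in \<open>M\<close> in the other with the same weight; as the
  two coin sets have probabilities in ratio \<open>(1 - p) : p\<close>, summing over \<open>e\<close> gives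
  \<open>E[w(M)] = p/(1 - p) E[w(N)]\<close>.

  For every outcome and every independent \<open>T\<close>, submodularity gives
  \<open>f(T) \<le> f(M) + \<Sum>z\<in>T-M. f\<^sub>M(z)\<close>. Elements of \<open>T \<inter> N\<close> contribute at most their weight, and the
  elements of \<open>T\<close> blocked by \<open>M\<close> can be charged injectively to elements of \<open>M\<close> of larger weight,
  because in a laminar matroid an independent set all of whose elements are blocked by an
  independent \<open>X\<close> has at most \<open>|X|\<close> elements. Hence \<open>OPT \<le> 2 w(M) + w(N)\<close>, and taking
  expectations \<open>OPT \<le> (1 + p)/p E[w(M)] \<le> 2/p E[w(M)]\<close>.
\<close>

section \<open>Expectation over independent coin flips\<close>

definition coin_weight :: "'a set \<Rightarrow> real \<Rightarrow> 'a set \<Rightarrow> real" where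
  "coin_weight U p H = p ^ card H * (1 - p) ^ (card U - card H)"

lemma expect_eq_coin_weight: "expect U p g = (\<Sum>H\<in>Pow U. coin_weight U p H * g H)"
  by (simp add: expect_def coin_weight_def)

lemma coin_weight_nonneg: "0 \<le> p \<Longrightarrow> p \<le> 1 \<Longrightarrow> 0 \<le> coin_weight U p H"
  by (simp add: coin_weight_def)

lemma sum_Pow_split:
  assumes "finite U" "e \<in> U"
  shows "(\<Sum>H\<in>Pow U. g H) = (\<Sum>H\<in>Pow (U - {e}). g H + g (insert e H))"
proof -
  have "Pow U = Pow (U - {e}) \<union> insert e ` Pow (U - {e})"
    using Pow_insert[of e "U - {e}"] assms(2) by (simp add: insert_absorb)
  moreover have "(\<Sum>H\<in>insert e ` Pow (U - {e}). g H) = (\<Sum>H\<in>Pow (U - {e}). g (insert e H))"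
    by (rule sum.reindex_cong[where l = "insert e"]) (auto intro: inj_onI)
  moreover have "Pow (U - {e}) \<inter> insert e ` Pow (U - {e}) = {}"
    by auto
  ultimately show ?thesis
    using assms(1) by (simp add: sum.union_disjoint sum.distrib)
qed

lemma coin_weight_insert:
  assumes "finite U" "e \<in> U" "H \<subseteq> U - {e}"
  shows "coin_weight U p H = (1 - p) * coin_weight (U - {e}) p H"
    and "coin_weight U p (insert e H) = p * coin_weight (U - {e}) p H"
proof -
  have "finite H" "e \<notin> H" "card H \<le> card (U - {e})"
    using assms by (auto intro: card_mono finite_subset simp del: card_Diff_insert)
  moreover have "card (U - {e}) = card U - 1" "card U > 0"
    using assms card_gt_0_iff by auto
  ultimately have "card U - card H = Suc (card (U - {e}) - card H)"
    "card U - card (insert e H) = card (U - {e}) - card H"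
    by auto
  then show "coin_weight U p H = (1 - p) * coin_weight (U - {e}) p H"
    and "coin_weight U p (insert e H) = p * coin_weight (U - {e}) p H"
    using \<open>finite H\<close> \<open>e \<notin> H\<close> by (simp_all add: coin_weight_def)
qed

lemma expect_const:
  assumes "finite U"
  shows "expect U p (\<lambda>_. c) = c"
proof -
  have "(\<Sum>H\<in>Pow U. p ^ card H * (1 - p) ^ (card U - card H)) = (\<Prod>_\<in>U. p + (1 - p))"
    using prod_add[OF assms, of "\<lambda>_. p" "\<lambda>_. 1 - p"] assms
    by (auto intro!: sum.cong simp: card_Diff_subset finite_subset)
  then show ?thesis
    by (simp add: expect_def sum_distrib_right[symmetric])
qed

lemma expect_mono:
  assumes "0 \<le> p" "p \<le> 1" "\<And>H. H \<subseteq> U \<Longrightarrow> g H \<le> h H"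
  shows "expect U p g \<le> expect U p h"
  unfolding expect_eq_coin_weight
  using assms coin_weight_nonneg by (intro sum_mono mult_left_mono) auto

lemma expect_linear:
  "expect U p (\<lambda>H. a * g H + b * h H) = a * expect U p g + b * expect U p h"
  by (simp add: expect_def algebra_simps sum.distrib sum_distrib_left)

lemma expect_sum:
  "expect U p (\<lambda>H. \<Sum>e\<in>A. g H e) = (\<Sum>e\<in>A. expect U p (\<lambda>H. g H e))"
  unfolding expect_def sum_distrib_left by (rule sum.swap)

lemma expect_exchange:
  assumes "finite U" "e \<in> U" "p \<noteq> 1"
    and "\<And>H. H \<subseteq> U - {e} \<Longrightarrow> a H = 0 \<and> b (insert e H) = 0 \<and> a (insert e H) = b H"
  shows "expect U p a = p / (1 - p) * expect U p b"
proof -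
  note split = sum_Pow_split[OF assms(1,2)] and weight = coin_weight_insert[OF assms(1,2)]
  have "expect U p a = (\<Sum>H\<in>Pow (U - {e}). p * coin_weight (U - {e}) p H * b H)"
    unfolding expect_eq_coin_weight split using assms(4) weight by (intro sum.cong) auto
  also have "\<dots> = p / (1 - p) * expect U p b"
    unfolding expect_eq_coin_weight split sum_distrib_left
    using assms(3,4) weight by (intro sum.cong) auto
  finally show ?thesis .
qed

section \<open>Monotone submodular functions\<close>

lemma marg_nonneg:
  assumes "monotone_fun U f" "A \<subseteq> U" "z \<in> U"
  shows "0 \<le> marg f A z"
proof -
  have "f A \<le> f (insert z A)"
    using assms unfolding monotone_fun_def by (meson insert_subset subset_insertI)
  then show ?thesis
    by (simp add: marg_def)
qed

lemma marg_antimono: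
  assumes "monotone_fun U f" "submodular U f" "A \<subseteq> B" "B \<subseteq> U" "z \<in> U"
  shows "marg f B z \<le> marg f A z"
proof (cases "z \<in> B")
  case True
  then show ?thesis
    using marg_nonneg[OF assms(1)] assms(3-5) by (auto simp: marg_def insert_absorb)
next
  case False
  have "f (insert z A \<union> B) + f (insert z A \<inter> B) \<le> f (insert z A) + f B"
    using assms(2-5) unfolding submodular_def by (metis insert_subset order_trans)
  moreover have "insert z A \<union> B = insert z B" "insert z A \<inter> B = A"
    using assms(3) False by auto
  ultimately show ?thesis
    unfolding marg_def by simp
qed

lemma submodular_union_le:
  assumes "monotone_fun U f" "submodular U f" "A \<subseteq> U" "B \<subseteq> U" "finite B"
  shows "f (A \<union> B) \<le> f A + (\<Sum>b\<in>B - A. marg f A b)"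
  using assms(5,4)
proof (induction B rule: finite_induct)
    case empty
  then show ?case by simp
next
  case (insert b B)
  show ?case
  proof (cases "b \<in> A")
    case True
    then show ?thesis
      using insert by (simp add: insert_absorb)
  next
    case False
    have "f (A \<union> insert b B) = f (A \<union> B) + marg f (A \<union> B) b"
      by (simp add: marg_def)
    also have "\<dots> \<le> f (A \<union> B) + marg f A b"
      using marg_antimono[OF assms(1,2)] assms(3) insert.prems by auto
    also have "\<dots> \<le> f A + (\<Sum>x\<in>insert b B - A. marg f A x)"
      using insert False by (simp add: insert_Diff_if)
    finally show ?thesis .
  qed
qed

section \<open>Laminar matroids\<close>

lemma lam_indep_subset:
  assumes "finite U" "lam_indep U F mu T" "S \<subseteq> T"
  shows "lam_indep U F mu S"
  unfolding lam_indep_def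
proof (intro conjI ballI)
  show "S \<subseteq> U"
    using assms(2,3) by (auto simp: lam_indep_def)
  fix B assume "B \<in> F"
  have "card (S \<inter> B) \<le> card (T \<inter> B)"
    using assms by (intro card_mono) (auto simp: lam_indep_def intro: finite_subset)
  also have "\<dots> \<le> mu B"
    using assms(2) \<open>B \<in> F\<close> by (simp add: lam_indep_def)
  finally show "card (S \<inter> B) \<le> mu B" .
qed

lemma laminar_maximal_members:
  assumes "laminar U F" "finite U" "\<T> \<subseteq> F"
  defines "\<M> \<equiv> {B\<in>\<T>. \<forall>B'\<in>\<T>. B \<subseteq> B' \<longrightarrow> B' = B}"
  shows "\<Union>\<M> = \<Union>\<T>" and "pairwise disjnt \<M>"
proof -
  have "\<T> \<subseteq> Pow U"
    using assms(1,3) by (auto simp: laminar_def)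
  then have "finite \<T>"
    using assms(2) by (meson finite_Pow_iff finite_subset)
  have "\<exists>B\<in>\<M>. y \<in> B" if "y \<in> C" "C \<in> \<T>" for y C
  proof -
    have "{B\<in>\<T>. y \<in> B} \<noteq> {}"
      using that by blast
    then obtain B where B: "B \<in> \<T>" "y \<in> B" "\<forall>B'\<in>{B\<in>\<T>. y \<in> B}. B \<subseteq> B' \<longrightarrow> B = B'"
      using finite_has_maximal[of "{B\<in>\<T>. y \<in> B}"] \<open>finite \<T>\<close> by auto
    then have "B \<in> \<M>"
      unfolding \<M>_def by auto
    with B(2) show ?thesis ..
  qed
  then show "\<Union>\<M> = \<Union>\<T>"
    unfolding \<M>_def by auto
  show "pairwise disjnt \<M>"
  proof (rule pairwiseI)
    fix B B' assume B: "B \<in> \<M>" "B' \<in> \<M>" "B \<noteq> B'"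
    then have "B \<in> F" "B' \<in> F"
      using assms(3) unfolding \<M>_def by auto
    then have "B \<inter> B' = {} \<or> B \<subseteq> B' \<or> B' \<subseteq> B"
      using assms(1) unfolding laminar_def by simp
    with B show "disjnt B B'"
      unfolding \<M>_def disjnt_def by auto
  qed
qed

lemma lam_indep_insert_tight:
  assumes "lam_indep U F mu X" "\<not> lam_indep U F mu (insert y X)" "y \<in> U" "y \<notin> X" "finite X"
  obtains B where "B \<in> F" "y \<in> B" "card (X \<inter> B) = mu B"
proof -
  have "insert y X \<subseteq> U"
    using assms(1,3) by (simp add: lam_indep_def)
  then obtain B where B: "B \<in> F" "card (insert y X \<inter> B) > mu B"
    using assms(2) unfolding lam_indep_def by (auto simp: not_le)
  moreover have "card (X \<inter> B) \<le> mu B"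
    using assms(1) B(1) by (simp add: lam_indep_def)
  ultimately have "y \<in> B" "card (X \<inter> B) = mu B"
    using assms(4,5) by (cases "y \<in> B"; simp)+
  with B(1) show ?thesis
    by (rule that)
qed

lemma lam_indep_blocked_card_le:
  assumes "finite U" "laminar U F" "lam_indep U F mu X" "lam_indep U F mu Y"
    and blocked: "\<forall>y\<in>Y. y \<notin> X \<and> \<not> lam_indep U F mu (insert y X)"
  shows "card Y \<le> card X"
proof -
  define \<T> where "\<T> = {B\<in>F. card (X \<inter> B) = mu B}"
  define \<M> where "\<M> = {B\<in>\<T>. \<forall>B'\<in>\<T>. B \<subseteq> B' \<longrightarrow> B' = B}"
  have "finite X" "finite Y"
    using assms(1,3,4) unfolding lam_indep_def by (auto intro: finite_subset)
  have "\<M> \<subseteq> Pow U"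
    using assms(2) unfolding laminar_def \<M>_def \<T>_def by auto
  then have "finite \<M>"
    using assms(1) by (meson finite_Pow_iff finite_subset)
  have "\<T> \<subseteq> F"
    unfolding \<T>_def by blast
  note maximal = laminar_maximal_members[OF assms(2,1) this, folded \<M>_def]
  have disj: "\<forall>B\<in>\<M>. \<forall>B'\<in>\<M>. B \<noteq> B' \<longrightarrow> S \<inter> B \<inter> (S \<inter> B') = {}" for S
    using maximal(2) unfolding pairwise_def disjnt_def by blast
  have "y \<in> \<Union>\<T>" if "y \<in> Y" for y
  proof -
    have "\<not> lam_indep U F mu (insert y X)" "y \<in> U" "y \<notin> X"
      using assms(4) blocked that by (auto simp: lam_indep_def)
    then obtain B where "B \<in> F" "y \<in> B" "card (X \<inter> B) = mu B"
      using \<open>finite X\<close> by (rule lam_indep_insert_tight[OF assms(3)])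
    then show ?thesis
      unfolding \<T>_def by blast
  qed
  then have "Y \<subseteq> \<Union>\<M>"
    unfolding maximal(1) by blast
  then have "Y = (\<Union>B\<in>\<M>. Y \<inter> B)"
    by blast
  then have "card Y = (\<Sum>B\<in>\<M>. card (Y \<inter> B))"
    using card_UN_disjoint[of \<M> "\<lambda>B. Y \<inter> B"] \<open>finite \<M>\<close> \<open>finite Y\<close> disj by simp
  also have "\<dots> \<le> (\<Sum>B\<in>\<M>. card (X \<inter> B))"
    using assms(4) by (intro sum_mono) (auto simp: lam_indep_def \<M>_def \<T>_def)
  also have "\<dots> = card (\<Union>B\<in>\<M>. X \<inter> B)"
    using card_UN_disjoint[of \<M> "\<lambda>B. X \<inter> B"] \<open>finite \<M>\<close> \<open>finite X\<close> disj by simp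
  also have "\<dots> \<le> card X"
    using \<open>finite X\<close> by (intro card_mono) auto
  finally show ?thesis .
qed

section \<open>The simulation\<close>

lemma inj_on_extend_card_le:
  assumes "finite A" "finite B" "A' \<subseteq> A" "inj_on \<phi> A'" "\<phi> ` A' \<subseteq> B" "card A \<le> card B"
  obtains \<chi> where "inj_on \<chi> A" "\<chi> ` A \<subseteq> B" "\<And>z. z \<in> A' \<Longrightarrow> \<chi> z = \<phi> z"
proof -
  have "card (A - A') = card A - card A'"
    using assms(1,3) by (meson card_Diff_subset finite_subset)
  also have "\<dots> \<le> card B - card (\<phi> ` A')"
    using assms(4,6) by (simp add: card_image)
  also have "\<dots> = card (B - \<phi> ` A')"
    using assms(2,5) by (metis card_Diff_subset finite_subset)
  finally obtain \<psi> where \<psi>: "\<psi> ` (A - A') \<subseteq> B - \<phi> ` A'" "inj_on \<psi> (A - A')"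
    using card_le_inj[of "A - A'" "B - \<phi> ` A'"] assms(1,2) by blast
  define \<chi> where "\<chi> z = (if z \<in> A' then \<phi> z else \<psi> z)" for z
  have "inj_on \<chi> (A' \<union> (A - A'))"
    unfolding inj_on_Un using assms(4) \<psi>
    by (auto simp: \<chi>_def inj_on_def)
  moreover have "A' \<union> (A - A') = A"
    using assms(3) by blast
  moreover have "\<chi> ` A \<subseteq> B"
    using assms(5) \<psi>(1) by (auto simp: \<chi>_def)
  ultimately show ?thesis
    using that[of \<chi>] by (simp add: \<chi>_def)
qed

locale greedy_simulation =
  fixes U :: "'a set" and I :: "'a set \<Rightarrow> bool" and f :: "'a set \<Rightarrow> real"
    and sel :: "'a set \<Rightarrow> 'a set \<Rightarrow> 'a set \<Rightarrow> 'a"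
  assumes finite_U: "finite U"
    and indep_subset_U: "I T \<Longrightarrow> T \<subseteq> U"
    and indep_empty: "I {}"
    and indep_subset: "I T \<Longrightarrow> S \<subseteq> T \<Longrightarrow> I S"
    and indep_blocked_card_le:
      "I X \<Longrightarrow> I Y \<Longrightarrow> \<forall>y\<in>Y. y \<notin> X \<and> \<not> I (insert y X) \<Longrightarrow> card Y \<le> card X"
    and monotone: "monotone_fun U f"
    and submodular: "submodular U f"
    and f_empty: "f {} = 0"
    and sel_in: "C \<noteq> {} \<Longrightarrow> sel M N C \<in> C"
begin

lemma best_nonempty:
  assumes "avail U I M N \<noteq> {}"
  shows "best U I f M N \<noteq> {}"
proof -
  have fin: "finite (avail U I M N)"
    using finite_U by (auto simp: avail_def)
  have "Max (marg f M ` avail U I M N) \<in> marg f M ` avail U I M N"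
    using fin assms by (intro Max_in) auto
  then obtain y where "y \<in> avail U I M N" "marg f M y = Max (marg f M ` avail U I M N)"
    by auto
  with fin show ?thesis
    unfolding best_def by auto
qed

lemma sim_step_cases:
  obtains (stop) "avail U I M N = {}" "sim_step U I f sel H (M, N, w) = (M, N, w)"
  | (accept) x where "x \<in> avail U I M N" "\<forall>z\<in>avail U I M N. marg f M z \<le> marg f M x"
      "x \<in> H" "sim_step U I f sel H (M, N, w) = (insert x M, N, w(x := marg f M x))"
  | (reject) x where "x \<in> avail U I M N" "\<forall>z\<in>avail U I M N. marg f M z \<le> marg f M x"
      "x \<notin> H" "sim_step U I f sel H (M, N, w) = (M, insert x N, w(x := marg f M x))"
proof (cases "avail U I M N = {}")
  case True
  then show ?thesis
    using stop by (simp add: sim_step_def)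
next
  case False
  define x where "x = sel M N (best U I f M N)"
  have "x \<in> best U I f M N"
    unfolding x_def using sel_in best_nonempty[OF False] .
  then have "x \<in> avail U I M N" "\<forall>z\<in>avail U I M N. marg f M z \<le> marg f M x"
    unfolding best_def by auto
  then show ?thesis
    using accept reject False by (cases "x \<in> H") (simp_all add: sim_step_def Let_def x_def[symmetric])
qed

definition run :: "'a set \<Rightarrow> nat \<Rightarrow> 'a set \<times> 'a set \<times> ('a \<Rightarrow> real)" where
  "run H k = (sim_step U I f sel H ^^ k) ({}, {}, \<lambda>_. 0)"

lemma run_0 [simp]: "run H 0 = ({}, {}, \<lambda>_. 0)"
  by (simp add: run_def)

lemma run_Suc [simp]: "run H (Suc k) = sim_step U I f sel H (run H k)"
  by (simp add: run_def)

lemma run_card_U: "run H (card U) = (sim_M U I f sel H, sim_N U I f sel H, sim_w U I f sel H)"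
  by (simp add: run_def simulate_def sim_M_def sim_N_def sim_w_def)

definition sim_inv :: "'a set \<Rightarrow> 'a set \<Rightarrow> 'a set \<Rightarrow> ('a \<Rightarrow> real) \<Rightarrow> bool" where
  "sim_inv H M N w \<longleftrightarrow> M \<subseteq> U \<and> N \<subseteq> U \<and> M \<subseteq> H \<and> N \<inter> H = {} \<and> I M \<and> f M = sum w M
     \<and> (\<forall>z\<in>M \<union> N. 0 \<le> w z) \<and> (\<forall>z\<in>N. marg f M z \<le> w z)
     \<and> (\<forall>m\<in>M. \<forall>z\<in>avail U I M N. marg f M z \<le> w m)"

lemma avail_marg_le_accepted_weight:
  assumes inv: "sim_inv H M N w" and x: "x \<in> avail U I M N"
    and x_best: "\<forall>z\<in>avail U I M N. marg f M z \<le> marg f M x"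
    and z: "z \<in> avail U I M N" and m: "m \<in> insert x M"
  shows "marg f M z \<le> (w(x := marg f M x)) m"
proof (cases "m = x")
  case True
  then show ?thesis
    using x_best z by simp
next
  case False
  then show ?thesis
    using inv z m by (auto simp: sim_inv_def)
qed

lemma sim_inv_accept:
  assumes inv: "sim_inv H M N w" and x: "x \<in> avail U I M N" "x \<in> H"
    and x_best: "\<forall>z\<in>avail U I M N. marg f M z \<le> marg f M x"
  shows "sim_inv H (insert x M) N (w(x := marg f M x))"
proof -
  let ?M' = "insert x M" and ?w' = "w(x := marg f M x)"
  have M: "M \<subseteq> U" "finite M" "x \<notin> M" "x \<in> U" "x \<notin> N" "I ?M'"
    using inv x finite_U by (auto simp: sim_inv_def avail_def intro: finite_subset)
  have shrink: "marg f ?M' z \<le> marg f M z" if "z \<in> U" for z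
    using M that by (intro marg_antimono[OF monotone submodular]) auto
  have "f ?M' = ?w' x + sum w M"
    using inv by (simp add: sim_inv_def marg_def)
  also have "sum w M = sum ?w' M"
    using M(3) by (intro sum.cong) auto
  finally have "f ?M' = sum ?w' ?M'"
    using M(2,3) by simp
  moreover have "0 \<le> ?w' z" if "z \<in> ?M' \<union> N" for z
    using inv that M marg_nonneg[OF monotone] by (auto simp: sim_inv_def)
  moreover have "marg f ?M' z \<le> ?w' z" if "z \<in> N" for z
  proof -
    have "z \<in> U" "z \<noteq> x" "marg f M z \<le> w z"
      using inv that M by (auto simp: sim_inv_def)
    then show ?thesis
      using shrink[of z] by simp
  qed
  moreover have "marg f ?M' z \<le> ?w' m" if m: "m \<in> ?M'" and z: "z \<in> avail U I ?M' N" for m z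
  proof -
    have "z \<in> avail U I M N"
      using z indep_subset unfolding avail_def by blast
    then have "marg f M z \<le> ?w' m"
      using avail_marg_le_accepted_weight[OF inv x(1) x_best _ m] by blast
    then show ?thesis
      using shrink[of z] z by (auto simp: avail_def)
  qed
  ultimately show ?thesis
    using inv M x(2) unfolding sim_inv_def by blast
qed

lemma sim_inv_reject:
  assumes inv: "sim_inv H M N w" and x: "x \<in> avail U I M N" "x \<notin> H"
  shows "sim_inv H M (insert x N) (w(x := marg f M x))"
proof -
  have "x \<notin> M" "x \<in> U" "M \<subseteq> U"
    using inv x by (auto simp: sim_inv_def avail_def)
  then have "sum (w(x := marg f M x)) M = sum w M" "0 \<le> marg f M x"
    using marg_nonneg[OF monotone] by (auto intro: sum.cong)
  then show ?thesis
    using inv x unfolding sim_inv_def avail_def by auto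
qed

lemma sim_inv_run: "run H k = (M, N, w) \<Longrightarrow> sim_inv H M N w"
proof (induction k arbitrary: M N w)
  case 0
  then show ?case
    by (auto simp: sim_inv_def indep_empty f_empty)
next
  case (Suc k)
  obtain M0 N0 w0 where run: "run H k = (M0, N0, w0)"
    by (cases "run H k")
  then have "sim_inv H M0 N0 w0"
    by (rule Suc.IH)
  with Suc.prems run show ?case
    by (cases rule: sim_step_cases[of M0 N0 H w0]) (auto intro: sim_inv_accept sim_inv_reject)
qed

lemma run_card_or_stop: "run H k = (M, N, w) \<Longrightarrow> avail U I M N = {} \<or> card (M \<union> N) = k"
proof (induction k arbitrary: M N w)
  case 0
  then show ?case by simp
next
  case (Suc k)
  obtain M0 N0 w0 where run: "run H k = (M0, N0, w0)"
    by (cases "run H k")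
  have "finite (M0 \<union> N0)"
    using sim_inv_run[OF run] finite_U by (auto simp: sim_inv_def intro: finite_subset)
  with Suc.IH[OF run] Suc.prems run show ?case
    by (cases rule: sim_step_cases[of M0 N0 H w0]) (auto simp: avail_def)
qed

lemma run_card_U_stopped:
  assumes "run H (card U) = (M, N, w)"
  shows "avail U I M N = {}"
proof (rule ccontr)
  assume "avail U I M N \<noteq> {}"
  moreover have "M \<union> N \<subseteq> U"
    using sim_inv_run[OF assms] by (simp add: sim_inv_def)
  ultimately have "M \<union> N = U"
    using run_card_or_stop[OF assms] finite_U by (simp add: card_subset_eq)
  with \<open>avail U I M N \<noteq> {}\<close> show False
    by (auto simp: avail_def)
qed

lemma sim_step_extends:
  assumes "sim_step U I f sel H (M, N, w) = (M', N', w')"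
  shows "M \<subseteq> M'" "N \<subseteq> N'" "\<forall>z\<in>M \<union> N. w' z = w z"
  using assms by (cases rule: sim_step_cases[of M N H w]; auto simp: avail_def)+

lemma run_insert_coin:
  assumes "e \<notin> H" "run H k = (M1, N1, w1)" "run (insert e H) k = (M2, N2, w2)"
  shows "((M1, N1, w1) = (M2, N2, w2) \<and> e \<notin> M1 \<union> N1) \<or> (e \<in> N1 \<and> e \<in> M2 \<and> w1 e = w2 e)"
  using assms(2,3)
proof (induction k arbitrary: M1 N1 w1 M2 N2 w2)
  case 0
  then show ?case by simp
next
  case (Suc k)
  obtain A1 B1 v1 where run1: "run H k = (A1, B1, v1)"
    by (cases "run H k")
  obtain A2 B2 v2 where run2: "run (insert e H) k = (A2, B2, v2)"
    by (cases "run (insert e H) k")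
  have step1: "sim_step U I f sel H (A1, B1, v1) = (M1, N1, w1)"
    using Suc.prems(1) run1 by simp
  have step2: "sim_step U I f sel (insert e H) (A2, B2, v2) = (M2, N2, w2)"
    using Suc.prems(2) run2 by simp
  from Suc.IH[OF run1 run2] show ?case
  proof
    assume "(A1, B1, v1) = (A2, B2, v2) \<and> e \<notin> A1 \<union> B1"
    with step1 step2 assms(1) show ?case
      unfolding sim_step_def Let_def by (auto split: if_splits)
  next
    assume "e \<in> B1 \<and> e \<in> A2 \<and> v1 e = v2 e"
    with sim_step_extends[OF step1] sim_step_extends[OF step2] show ?case
      by auto
  qed
qed

definition blocked :: "'a set \<Rightarrow> 'a set \<Rightarrow> 'a set" where
  "blocked M N = {z \<in> U - (M \<union> N). \<not> I (insert z M)}"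

definition charged :: "'a set \<Rightarrow> 'a set \<Rightarrow> 'a set \<Rightarrow> ('a \<Rightarrow> real) \<Rightarrow> ('a \<Rightarrow> 'a) \<Rightarrow> bool" where
  "charged T M N w \<phi> \<longleftrightarrow> inj_on \<phi> (T \<inter> blocked M N) \<and> \<phi> ` (T \<inter> blocked M N) \<subseteq> M
     \<and> (\<forall>z\<in>T \<inter> blocked M N. marg f M z \<le> w (\<phi> z))"

lemma charged_accept:
  assumes T: "I T" and inv: "sim_inv H M N w" and \<phi>: "charged T M N w \<phi>"
    and x: "x \<in> avail U I M N" "\<forall>z\<in>avail U I M N. marg f M z \<le> marg f M x"
  obtains \<chi> where "charged T (insert x M) N (w(x := marg f M x)) \<chi>"
proof -
  let ?M' = "insert x M" and ?w' = "w(x := marg f M x)"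
  define A where "A = T \<inter> blocked ?M' N"
  define A' where "A' = A \<inter> blocked M N"
  have M: "M \<subseteq> U" "x \<notin> M" "I ?M'" "finite ?M'"
    using inv x(1) finite_U by (auto simp: sim_inv_def avail_def intro: finite_subset)
  have "finite A"
    using indep_subset_U[OF T] finite_U unfolding A_def by (auto intro: finite_subset)
  moreover note \<open>finite ?M'\<close>
  moreover have "A' \<subseteq> A"
    unfolding A'_def by blast
  moreover have "inj_on \<phi> A'" "\<phi> ` A' \<subseteq> ?M'"
    using \<phi> unfolding charged_def A'_def A_def by (auto intro: inj_on_subset)
  moreover have "card A \<le> card ?M'"
    using indep_blocked_card_le[OF M(3) indep_subset[OF T]] unfolding A_def blocked_def by auto
  ultimately obtain \<chi> where \<chi>: "inj_on \<chi> A" "\<chi> ` A \<subseteq> ?M'" "\<And>z. z \<in> A' \<Longrightarrow> \<chi> z = \<phi> z"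
    by (rule inj_on_extend_card_le) blast
  have "marg f ?M' z \<le> ?w' (\<chi> z)" if z: "z \<in> A" for z
  proof -
    have "z \<in> U"
      using z unfolding A_def blocked_def by auto
    then have "marg f ?M' z \<le> marg f M z"
      using M x(1) by (intro marg_antimono[OF monotone submodular]) (auto simp: avail_def)
    moreover have "marg f M z \<le> ?w' (\<chi> z)"
    proof (cases "z \<in> A'")
      case True
      then have "\<chi> z = \<phi> z" "\<phi> z \<in> M" "marg f M z \<le> w (\<phi> z)"
        using \<phi> \<chi>(3) unfolding charged_def A'_def A_def by auto
      then show ?thesis
        using M(2) by auto
    next
      case False
      then have avail: "z \<in> avail U I M N"
        using z unfolding A'_def A_def blocked_def avail_def by auto
      moreover have "\<chi> z \<in> ?M'"
        using \<chi>(2) z by blast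
      ultimately show ?thesis
        by (rule avail_marg_le_accepted_weight[OF inv x])
    qed
    ultimately show ?thesis
      by linarith
  qed
  then have "charged T ?M' N ?w' \<chi>"
    using \<chi>(1,2) unfolding charged_def A_def by blast
  then show ?thesis
    by (rule that)
qed

lemma run_charged:
  assumes T: "I T"
  shows "run H k = (M, N, w) \<Longrightarrow> \<exists>\<phi>. charged T M N w \<phi>"
proof (induction k arbitrary: M N w)
  case 0
  have "T \<inter> blocked {} {} = {}"
    using indep_subset[OF T] by (auto simp: blocked_def)
  with 0 show ?case
    by (auto simp: charged_def)
next
  case (Suc k)
  obtain M0 N0 w0 where run: "run H k = (M0, N0, w0)"
    by (cases "run H k")
  obtain \<phi> where \<phi>: "charged T M0 N0 w0 \<phi>"
    using Suc.IH[OF run] by blast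
  have inv: "sim_inv H M0 N0 w0"
    by (rule sim_inv_run[OF run])
  show ?case
  proof (cases rule: sim_step_cases[of M0 N0 H w0])
    case stop
    then show ?thesis
      using Suc.prems run \<phi> by auto
  next
    case (accept x)
    then obtain \<chi> where "charged T (insert x M0) N0 (w0(x := marg f M0 x)) \<chi>"
      using charged_accept[OF T inv \<phi>] by blast
    with accept Suc.prems run show ?thesis
      by auto
  next
    case (reject x)
    then have "M = M0" "N = insert x N0" "w = w0(x := marg f M0 x)" "x \<notin> M0"
      using Suc.prems run by (auto simp: avail_def)
    moreover have "blocked M0 (insert x N0) \<subseteq> blocked M0 N0"
      by (auto simp: blocked_def)
    ultimately have "charged T M N w \<phi>"
      using \<phi> unfolding charged_def by (fastforce intro: inj_on_subset)
    then show ?thesis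
      by blast
  qed
qed

lemma indep_le_run_bound:
  assumes T: "I T" and run: "run H (card U) = (M, N, w)"
  shows "f T \<le> 2 * sum w M + sum w N"
proof -
  have inv: "sim_inv H M N w"
    by (rule sim_inv_run[OF run])
  obtain \<phi> where \<phi>: "charged T M N w \<phi>"
    using run_charged[OF T run] by blast
  have TU: "T \<subseteq> U" and MU: "M \<subseteq> U" and fin: "finite M" "finite N" "finite T"
    using indep_subset_U[OF T] inv finite_U by (auto simp: sim_inv_def intro: finite_subset)
  have w_nonneg: "\<forall>z\<in>M \<union> N. 0 \<le> w z"
    using inv by (simp add: sim_inv_def)
  have "T - M = (T \<inter> N) \<union> (T \<inter> blocked M N)"
    using run_card_U_stopped[OF run] TU inv by (auto simp: avail_def blocked_def sim_inv_def)
  moreover have "(T \<inter> N) \<inter> (T \<inter> blocked M N) = {}"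
    by (auto simp: blocked_def)
  ultimately have split: "(\<Sum>z\<in>T - M. marg f M z)
      = (\<Sum>z\<in>T \<inter> N. marg f M z) + (\<Sum>z\<in>T \<inter> blocked M N. marg f M z)"
    using fin by (simp add: sum.union_disjoint)
  have "(\<Sum>z\<in>T \<inter> N. marg f M z) \<le> (\<Sum>z\<in>T \<inter> N. w z)"
    using inv by (intro sum_mono) (auto simp: sim_inv_def)
  also have "\<dots> \<le> sum w N"
    using w_nonneg fin by (intro sum_mono2) auto
  finally have N_part: "(\<Sum>z\<in>T \<inter> N. marg f M z) \<le> sum w N" .
  have "(\<Sum>z\<in>T \<inter> blocked M N. marg f M z) \<le> (\<Sum>z\<in>T \<inter> blocked M N. w (\<phi> z))"
    using \<phi> by (intro sum_mono) (auto simp: charged_def)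
  also have "\<dots> = sum w (\<phi> ` (T \<inter> blocked M N))"
    using \<phi> by (simp add: charged_def sum.reindex)
  also have "\<dots> \<le> sum w M"
    using \<phi> w_nonneg fin by (intro sum_mono2) (auto simp: charged_def)
  finally have blocked_part: "(\<Sum>z\<in>T \<inter> blocked M N. marg f M z) \<le> sum w M" .
  have "f T \<le> f (M \<union> T)"
    using monotone TU MU unfolding monotone_fun_def by auto
  also have "\<dots> \<le> f M + (\<Sum>z\<in>T - M. marg f M z)"
    using submodular_union_le[OF monotone submodular MU TU fin(3)] .
  finally show ?thesis
    using split N_part blocked_part inv by (simp add: sim_inv_def)
qed

lemma sim_inv_result: "sim_inv H (sim_M U I f sel H) (sim_N U I f sel H) (sim_w U I f sel H)"
  using sim_inv_run[OF run_card_U] .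

lemma expect_f_sim_M:
  "expect U p (\<lambda>H. f (sim_M U I f sel H)) = expect U p (\<lambda>H. sum (sim_w U I f sel H) (sim_M U I f sel H))"
  using sim_inv_result by (simp add: sim_inv_def)

lemma expect_w_sim_M_eq:
  assumes "p \<noteq> 1"
  shows "expect U p (\<lambda>H. sum (sim_w U I f sel H) (sim_M U I f sel H))
       = p / (1 - p) * expect U p (\<lambda>H. sum (sim_w U I f sel H) (sim_N U I f sel H))"
proof -
  define M where "M H = sim_M U I f sel H" for H
  define N where "N H = sim_N U I f sel H" for H
  define w where "w H = sim_w U I f sel H" for H
  have inv: "sim_inv H (M H) (N H) (w H)" for H
    unfolding M_def N_def w_def by (rule sim_inv_result)
  have run: "run H (card U) = (M H, N H, w H)" for H
    unfolding M_def N_def w_def by (rule run_card_U)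
  have sum_over_U: "sum (w H) S = (\<Sum>e\<in>U. if e \<in> S then w H e else 0)" if "S \<subseteq> U" for S H
    using sum.inter_restrict[OF finite_U, of "w H" S] that by (simp add: Int_absorb1)
  have M_U: "M H \<subseteq> U" and N_U: "N H \<subseteq> U" for H
    using inv[of H] by (auto simp: sim_inv_def)
  have exchange: "expect U p (\<lambda>H. if e \<in> M H then w H e else 0)
      = p / (1 - p) * expect U p (\<lambda>H. if e \<in> N H then w H e else 0)" if e: "e \<in> U" for e
  proof (rule expect_exchange[OF finite_U e assms])
    fix H assume "H \<subseteq> U - {e}"
    then have "e \<notin> H"
      by blast
    then show "(if e \<in> M H then w H e else 0) = 0 \<and>
        (if e \<in> N (insert e H) then w (insert e H) e else 0) = 0 \<and>
        (if e \<in> M (insert e H) then w (insert e H) e else 0) = (if e \<in> N H then w H e else 0)"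
      using inv[of H] inv[of "insert e H"] run_insert_coin[OF \<open>e \<notin> H\<close> run run]
      by (auto simp: sim_inv_def)
  qed
  have "expect U p (\<lambda>H. sum (w H) (M H)) = (\<Sum>e\<in>U. expect U p (\<lambda>H. if e \<in> M H then w H e else 0))"
    by (simp add: sum_over_U[OF M_U] expect_sum)
  also have "\<dots> = p / (1 - p) * (\<Sum>e\<in>U. expect U p (\<lambda>H. if e \<in> N H then w H e else 0))"
    by (simp add: exchange sum_distrib_left)
  also have "\<dots> = p / (1 - p) * expect U p (\<lambda>H. sum (w H) (N H))"
    by (simp add: sum_over_U[OF N_U] expect_sum)
  finally show ?thesis
    unfolding M_def N_def w_def .
qed

lemma Max_indep_le_expect:
  assumes "0 \<le> p" "p \<le> 1"
  shows "Max (f ` {T. I T}) \<le> 2 * expect U p (\<lambda>H. sum (sim_w U I f sel H) (sim_M U I f sel H))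
                                  + expect U p (\<lambda>H. sum (sim_w U I f sel H) (sim_N U I f sel H))"
proof -
  have "finite {T. I T}"
    using finite_U indep_subset_U by (metis Collect_mono finite_Pow_iff Pow_def rev_finite_subset)
  then obtain T where T: "I T" "Max (f ` {T. I T}) = f T"
    using Max_in[of "f ` {T. I T}"] indep_empty by fastforce
  have "f T = expect U p (\<lambda>_. f T)"
    by (simp add: expect_const[OF finite_U])
  also have "\<dots> \<le> expect U p (\<lambda>H. 2 * sum (sim_w U I f sel H) (sim_M U I f sel H)
                                      + 1 * sum (sim_w U I f sel H) (sim_N U I f sel H))"
    using assms indep_le_run_bound[OF T(1) run_card_U] by (intro expect_mono) auto
  finally show ?thesis
    unfolding T(2) expect_linear by simp
qed

lemma expect_w_sim_N_nonneg:
  assumes "0 \<le> p" "p \<le> 1"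
  shows "0 \<le> expect U p (\<lambda>H. sum (sim_w U I f sel H) (sim_N U I f sel H))"
  unfolding expect_eq_coin_weight using assms sim_inv_result
  by (intro sum_nonneg mult_nonneg_nonneg coin_weight_nonneg) (auto simp: sim_inv_def)

lemma expect_w_sim_N_ge:
  assumes "0 < p" "p < 1"
  shows "p / (1 - p) * expect U p (\<lambda>H. sum (sim_w U I f sel H) (sim_N U I f sel H))
           \<ge> p / 2 * Max (f ` {T. I T})"
proof -
  define m where "m = expect U p (\<lambda>H. sum (sim_w U I f sel H) (sim_M U I f sel H))"
  define n where "n = expect U p (\<lambda>H. sum (sim_w U I f sel H) (sim_N U I f sel H))"
  have m_eq: "m = p / (1 - p) * n"
    unfolding m_def n_def using expect_w_sim_M_eq assms by simp
  then have "p * n = (1 - p) * m" "0 \<le> m"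
    using assms expect_w_sim_N_nonneg unfolding n_def by simp_all
  have "p * Max (f ` {T. I T}) \<le> p * (2 * m + n)"
    using Max_indep_le_expect assms unfolding m_def n_def by simp
  also have "\<dots> = m + p * m"
    using \<open>p * n = (1 - p) * m\<close> by (simp add: algebra_simps)
  also have "\<dots> \<le> 2 * m"
    using \<open>0 \<le> m\<close> assms(2) mult_right_mono[of p 1 m] by simp
  finally show ?thesis
    using m_eq unfolding n_def by (simp add: field_simps)
qed

end

theorem lemma2:
  fixes U :: "'a set" and F :: "'a set set" and mu :: "'a set \<Rightarrow> nat"
    and f :: "'a set \<Rightarrow> real" and p :: real
    and sel :: "'a set \<Rightarrow> 'a set \<Rightarrow> 'a set \<Rightarrow> 'a"
  assumes "finite U"
    and "laminar U F"
    and "\<forall>T. T \<subseteq> U \<longrightarrow> f T \<ge> 0"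
    and "f {} = 0"
    and "monotone_fun U f"
    and "submodular U f"
    and "0 < p" and "p < 1"
    and "\<forall>M N C. C \<noteq> {} \<longrightarrow> sel M N C \<in> C"
  shows "expect U p (\<lambda>H. f (sim_M U (lam_indep U F mu) f sel H))
           = expect U p (\<lambda>H. sum (sim_w U (lam_indep U F mu) f sel H) (sim_M U (lam_indep U F mu) f sel H))
       \<and> expect U p (\<lambda>H. sum (sim_w U (lam_indep U F mu) f sel H) (sim_M U (lam_indep U F mu) f sel H))
           = p / (1 - p) * expect U p (\<lambda>H. sum (sim_w U (lam_indep U F mu) f sel H) (sim_N U (lam_indep U F mu) f sel H))
       \<and> p / (1 - p) * expect U p (\<lambda>H. sum (sim_w U (lam_indep U F mu) f sel H) (sim_N U (lam_indep U F mu) f sel H))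
           \<ge> p / 2 * Max (f ` {T. lam_indep U F mu T})"
proof -
  interpret greedy_simulation U "lam_indep U F mu" f sel
  proof
    show "lam_indep U F mu T \<Longrightarrow> T \<subseteq> U" for T
      by (simp add: lam_indep_def)
    show "lam_indep U F mu {}"
      by (simp add: lam_indep_def)
    show "lam_indep U F mu T \<Longrightarrow> S \<subseteq> T \<Longrightarrow> lam_indep U F mu S" for T S
      using lam_indep_subset assms(1) .
    show "lam_indep U F mu X \<Longrightarrow> lam_indep U F mu Y
        \<Longrightarrow> \<forall>y\<in>Y. y \<notin> X \<and> \<not> lam_indep U F mu (insert y X) \<Longrightarrow> card Y \<le> card X" for X Y
      using lam_indep_blocked_card_le assms(1,2) .
  qed (use assms in auto)
  show ?thesis
    using expect_f_sim_M expect_w_sim_M_eq expect_w_sim_N_ge assms(7,8) by simp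
qed

end
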